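(* Let $r\ge 1$ be an integer and let $A$ be a finite totally ordered alphabet of digits whose smallest letter is $0$. Let $w_0,\ldots,w_{r-1}$ be $r$ non-empty words in $\mathsf{inc}(A^* )$ such that $\mathsf{s}=(w_0,\ldots,w_{r-1})^\omega$ is a purely periodic labeled signature, let $L(\mathsf{s})$ be the associated language and $\mathcal{S}=(L(\mathsf{s}),A,<)$ the associated abstract numeration system. Let $\mathcal{A}=(Q,q_0,A,\delta)$ be a deterministic finite automaton (with complete transition function $\delta:Q\times A\to Q$). For $i\in\{0,\ldots,r-1\}$ define the morphism $f_i:Q^*\to Q^*$ by $$f_i(q)=\delta(q,w_{i,0})\,\delta(q,w_{i,1})\cdots\delta(q,w_{i,|w_i|-1})\quad(q\in Q),$$ where $w_{i,j}$ is the $j$th letter of $w_i$ (indexed from $0$). Let $\mathbf{x}=x_0x_1\cdots$ be the alternating fixed point of $(f_0,\ldots,f_{r-1})$ starting with $q_0$ (i.e., with $x_0=q_0$). Then for all $n\ge 0$, $x_n=\delta(q_0,\mathrm{rep}_{\mathcal{S}}(n))$; that is, $\mathbf{x}$ is the sequence of states reached in $\mathcal{A}$ when reading the words of $L(\mathsf{s})$ in increasing radix order.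
   Context: $\mathsf{inc}(A^* )$ is the set of words over $A$ whose letters are in strictly increasing order. A purely periodic labeled signature is an infinite sequence $\mathsf{s}=(s_n)_{n\ge0}$ with $s_n=w_{n\bmod r}$, where each $w_i\in\mathsf{inc}(A^* )$ and $w_0=0y$ for some non-empty word $y$. It generates an infinite labeled tree (an "i-tree") as follows: nodes $v_0,v_1,v_2,\ldots$ are created in breadth-first order; $v_0$ is the root; the children of $v_n$ are reached by edges labeled by the letters of $s_n$ in increasing order, new children receiving the next unused indices in this order; for the root, the edge labeled $0$ is a loop from $v_0$ to itself, and the other letters of $s_0$ lead to $v_1,\ldots,v_{|s_0|-1}$; then the children of $v_1$, then of $v_2$, etc. The language $L(\mathsf{s})$ is the set of labels of paths from the root that do not start with $0$ (i.e., that do not use the loop); each node corresponds to exactly one word of $L(\mathsf{s})$, and $v_n$ corresponds to the $(n+1)$st word of $L(\mathsf{s})$ in radix order (words ordered first by length, then lexicographically). For the abstract numeration system $\mathcal{S}=(L(\mathsf{s}),A,<)$, $\mathrm{rep}_{\mathcal{S}}(n)$ is the $(n+1)$st word of $L(\mathsf{s})$ in radix order (so $\mathrm{rep}_{\mathcal{S}}(0)=\varepsilon$). An infinite word $\mathbf{x}=x_0x_1\cdots$ is an alternating fixed point of $(f_0,\ldots,f_{r-1})$ if $\mathbf{x}=f_0(x_0)f_1(x_1)\cdots f_{i\bmod r}(x_i)\cdots$. *)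

theory Defs
  imports Main
begin

definition inc_word :: "'a::linorder set \<Rightarrow> 'a list \<Rightarrow> bool" where
  "inc_word A u \<longleftrightarrow> set u \<subseteq> A \<and> sorted_wrt (<) u"

definition psig :: "nat \<Rightarrow> (nat \<Rightarrow> 'a list) \<Rightarrow> nat \<Rightarrow> 'a list" where
  "psig r w n = w (n mod r)"

(* number of new children created by node v_n (the root's loop creates none) *)
definition nchildren :: "(nat \<Rightarrow> 'a list) \<Rightarrow> nat \<Rightarrow> nat" where
  "nchildren s n = (if n = 0 then length (s 0) - 1 else length (s n))"

(* The j-th letter (0-indexed) of s_n leads, for n >= 1, to node
   1 + (number of children created by v_0..v_{n-1}) + j; at the root the
   letter s_0!0 (= 0) is a loop, the letter s_0!j (j>=1) leads to v_j. *)
definition itree_edge :: "(nat \<Rightarrow> 'a list) \<Rightarrow> nat \<Rightarrow> 'a \<Rightarrow> nat option" where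
  "itree_edge s n a =
     (if a \<in> set (s n) then
        (let j = (THE j. j < length (s n) \<and> s n ! j = a) in
          Some (if n = 0 then j else 1 + (\<Sum>k<n. nchildren s k) + j))
      else None)"

fun itree_path :: "(nat \<Rightarrow> 'a list) \<Rightarrow> nat \<Rightarrow> 'a list \<Rightarrow> nat option" where
  "itree_path s n [] = Some n"
| "itree_path s n (a # u) =
     (case itree_edge s n a of None \<Rightarrow> None | Some m \<Rightarrow> itree_path s m u)"

(* L(s): labels of paths from the root that do not start with the letter z (= 0) *)
definition itree_lang :: "'a \<Rightarrow> (nat \<Rightarrow> 'a list) \<Rightarrow> 'a list set" where
  "itree_lang z s = {u. itree_path s 0 u \<noteq> None \<and> (u = [] \<or> hd u \<noteq> z)}"

definition radix_less :: "'a::linorder list \<Rightarrow> 'a list \<Rightarrow> bool" where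
  "radix_less u v \<longleftrightarrow> (u, v) \<in> lenlex {(a, b). a < b}"

definition rep_ans :: "'a::linorder list set \<Rightarrow> nat \<Rightarrow> 'a list" where
  "rep_ans L n = (THE u. u \<in> L \<and> card {v \<in> L. radix_less v u} = n)"

definition delta_star :: "('q \<Rightarrow> 'a \<Rightarrow> 'q) \<Rightarrow> 'q \<Rightarrow> 'a list \<Rightarrow> 'q" where
  "delta_star \<delta> q u = foldl \<delta> q u"

definition alt_fixed_point :: "nat \<Rightarrow> (nat \<Rightarrow> 'q \<Rightarrow> 'q list) \<Rightarrow> (nat \<Rightarrow> 'q) \<Rightarrow> bool" where
  "alt_fixed_point r f x \<longleftrightarrow>
     (\<forall>i. f (i mod r) (x i) \<noteq> []) \<and>
     (\<forall>i j. j < length (f (i mod r) (x i)) \<longrightarrow>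
        x ((\<Sum>k<i. length (f (k mod r) (x k))) + j) = f (i mod r) (x i) ! j)"

end

theory Submission
  imports Defs
begin

(* Node v_n of the i-tree is reached from the root by exactly one word of L(s), and the
   children of v_n are v_(F n + j) for j < |s_n|, where F n = |s_0| + ... + |s_(n-1)| is
   first_child s n. Since the radix order compares u a and v b by first comparing the parents
   u and v, and then the last letters, the node index is strictly radix-monotone on L(s), and
   it is onto the naturals by induction; hence rep(n) is the word leading to v_n. Reading the
   fixed-point equation x_(F n + j) = delta(x_n, s_n ! j) along that path gives
   x_n = delta(q0, rep(n)). *)

lemma radix_less_total:
  fixes u v :: "'a::linorder list"
  assumes "u \<noteq> v"
  shows "radix_less u v \<or> radix_less v u"
proof -
  have "total (lenlex {(a::'a, b). a < b})"
    by (rule total_lenlex) (auto simp: total_on_def)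
  then show ?thesis
    using assms unfolding radix_less_def total_on_def by blast
qed

lemma radix_less_snoc:
  assumes "radix_less (u @ [a]) (v @ [b])"
  shows "radix_less u v \<or> (u = v \<and> a < (b :: 'a::linorder))"
proof -
  consider "length u < length v"
    | "length u = length v" "(u @ [a], v @ [b]) \<in> lex {(a, b). a < b}"
    using assms by (auto simp: radix_less_def lenlex_conv)
  then show ?thesis
  proof cases
    case 1
    then show ?thesis by (simp add: radix_less_def lenlex_conv)
  next
    case 2
    show ?thesis
    proof (cases "u = v")
      case True
      then have "([a], [b]) \<in> lex {(a, b). a < b}"
        using 2 lex_append_leftD[of "{(a, b). a < b}" v "[a]" "[b]"] by simp
      then show ?thesis using True by simp
    next
      case False
      have "(u @ [a], v @ [b]) \<in> lexord {(a, b). a < b}"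
        using 2(2) lexord_lex by blast
      then have "(u, v) \<in> lexord {(a, b). a < b}"
        using lexord_sufE[of u "[a]" v "[b]"] False 2(1) by simp
      then show ?thesis using 2(1) by (simp add: radix_less_def lenlex_conv lexord_lex)
    qed
  qed
qed

lemma radix_mono_inj_on:
  fixes L :: "'a::linorder list set" and f :: "'a list \<Rightarrow> nat"
  assumes "\<And>u v. u \<in> L \<Longrightarrow> v \<in> L \<Longrightarrow> radix_less u v \<Longrightarrow> f u < f v"
  shows "inj_on f L"
  by (rule inj_onI) (metis assms radix_less_total less_irrefl)

lemma card_radix_less_eq:
  fixes L :: "'a::linorder list set" and f :: "'a list \<Rightarrow> nat"
  assumes mono: "\<And>u v. u \<in> L \<Longrightarrow> v \<in> L \<Longrightarrow> radix_less u v \<Longrightarrow> f u < f v"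
    and surj: "f ` L = UNIV" and "u \<in> L"
  shows "card {v \<in> L. radix_less v u} = f u"
proof -
  have "f ` {v \<in> L. radix_less v u} = {..<f u}"
  proof
    show "f ` {v \<in> L. radix_less v u} \<subseteq> {..<f u}"
      using mono \<open>u \<in> L\<close> by auto
    show "{..<f u} \<subseteq> f ` {v \<in> L. radix_less v u}"
    proof
      fix m assume "m \<in> {..<f u}"
      moreover obtain v where "v \<in> L" "f v = m"
        using surj by (metis UNIV_I imageE)
      ultimately have "radix_less v u"
        using mono[OF \<open>u \<in> L\<close> \<open>v \<in> L\<close>] radix_less_total[of v u] by fastforce
      then show "m \<in> f ` {v \<in> L. radix_less v u}"
        using \<open>v \<in> L\<close> \<open>f v = m\<close> by blast
    qed
  qed
  moreover have "inj_on f {v \<in> L. radix_less v u}"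
    using radix_mono_inj_on[of L f, OF mono] by (rule inj_on_subset) auto
  ultimately show ?thesis
    by (metis card_image card_lessThan)
qed

lemma rep_ans_eqI:
  fixes L :: "'a::linorder list set" and f :: "'a list \<Rightarrow> nat"
  assumes mono: "\<And>u v. u \<in> L \<Longrightarrow> v \<in> L \<Longrightarrow> radix_less u v \<Longrightarrow> f u < f v"
    and surj: "f ` L = UNIV" and "u \<in> L"
  shows "rep_ans L (f u) = u"
  unfolding rep_ans_def
proof (rule the_equality)
  show "u \<in> L \<and> card {v \<in> L. radix_less v u} = f u"
    using card_radix_less_eq[of L f, OF mono surj] \<open>u \<in> L\<close> by blast
  fix u' assume u': "u' \<in> L \<and> card {v \<in> L. radix_less v u'} = f u"
  then have "f u' = f u"
    using card_radix_less_eq[of L f u', OF mono surj] by simp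
  then show "u' = u"
    using radix_mono_inj_on[of L f, OF mono] u' \<open>u \<in> L\<close> by (simp add: inj_on_eq_iff)
qed

lemma itree_path_append:
  "itree_path s n (u @ v) = (case itree_path s n u of None \<Rightarrow> None | Some m \<Rightarrow> itree_path s m v)"
  by (induction u arbitrary: n) (auto split: option.split)

lemma itree_path_snoc_eq_Some_iff:
  "itree_path s n (u @ [a]) = Some m \<longleftrightarrow> (\<exists>k. itree_path s n u = Some k \<and> itree_edge s k a = Some m)"
  by (auto simp: itree_path_append split: option.splits)

lemma itree_lang_snocD: "u @ [a] \<in> itree_lang z s \<Longrightarrow> u \<in> itree_lang z s"
  by (cases u) (auto simp: itree_lang_def itree_path_append split: option.splits)

(* For n = 0 this is the root itself, the target of the loop labelled 0. *)
definition first_child :: "(nat \<Rightarrow> 'a list) \<Rightarrow> nat \<Rightarrow> nat" where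
  "first_child s n = (\<Sum>k<n. length (s k))"

lemma first_child_0 [simp]: "first_child s 0 = 0"
  by (simp add: first_child_def)

lemma first_child_Suc: "first_child s (Suc n) = first_child s n + length (s n)"
  by (simp add: first_child_def)

lemma first_child_Suc_le: "n < n' \<Longrightarrow> first_child s (Suc n) \<le> first_child s n'"
  by (induction n') (auto simp: first_child_Suc less_Suc_eq)

lemma first_child_interval:
  "m < first_child s k \<Longrightarrow> \<exists>n < k. first_child s n \<le> m \<and> m < first_child s (Suc n)"
proof (induction k)
  case (Suc k)
  then show ?case
    by (cases "m < first_child s k") (auto intro: less_SucI simp: not_less)
qed simp

(* Non-empty words make the tree infinite, so that every natural number is a node. *)
locale labeled_signature =
  fixes s :: "nat \<Rightarrow> 'a::linorder list" and z :: 'a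
  assumes nonempty: "s n \<noteq> []"
    and strictly_sorted: "sorted_wrt (<) (s n)"
    and root_word: "\<exists>y. y \<noteq> [] \<and> s 0 = z # y"
begin

lemma root_word_nth_0: "s 0 ! 0 = z"
  using root_word by auto

lemma first_child_gt: "1 \<le> n \<Longrightarrow> n < first_child s n"
proof (induction n)
  case (Suc n)
  have "Suc 0 < length (s 0)" "0 < length (s n)"
    using root_word nonempty[of n] by auto
  then show ?case
    using Suc by (cases "n = 0") (auto simp: first_child_Suc simp del: length_greater_0_conv)
qed simp

lemma first_child_eq_nchildren: "1 \<le> n \<Longrightarrow> first_child s n = 1 + (\<Sum>k<n. nchildren s k)"
proof (induction n)
  case (Suc n)
  then show ?case
    using root_word by (cases n) (auto simp: first_child_Suc nchildren_def)
qed simp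

lemma itree_edge_nth:
  assumes "j < length (s n)"
  shows "itree_edge s n (s n ! j) = Some (first_child s n + j)"
proof -
  have "distinct (s n)"
    using strictly_sorted[of n] by (simp add: strict_sorted_iff)
  then have "(THE j'. j' < length (s n) \<and> s n ! j' = s n ! j) = j"
    using assms by (auto simp: nth_eq_iff_index_eq)
  then show ?thesis
    using assms first_child_eq_nchildren[of n] by (auto simp: itree_edge_def)
qed

lemma itree_edge_eq_Some_iff:
  "itree_edge s n a = Some m \<longleftrightarrow> (\<exists>j < length (s n). s n ! j = a \<and> m = first_child s n + j)"
proof
  assume edge: "itree_edge s n a = Some m"
  then have "a \<in> set (s n)"
    by (auto simp: itree_edge_def split: if_splits)
  then obtain j where "j < length (s n)" "s n ! j = a"
    by (auto simp: in_set_conv_nth)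
  then show "\<exists>j < length (s n). s n ! j = a \<and> m = first_child s n + j"
    using edge itree_edge_nth by auto
qed (auto simp: itree_edge_nth)

lemma itree_path_ge: "itree_path s n u = Some m \<Longrightarrow> 1 \<le> n \<Longrightarrow> n \<le> m"
proof (induction u arbitrary: n)
  case (Cons a u)
  then obtain k where "itree_edge s n a = Some k" "itree_path s k u = Some m"
    by (auto split: option.splits)
  then show ?case
    using Cons first_child_gt[of n] by (fastforce simp: itree_edge_eq_Some_iff)
qed simp

lemma itree_lang_path_pos:
  assumes "u \<in> itree_lang z s" "u \<noteq> []" "itree_path s 0 u = Some m"
  shows "0 < m"
proof -
  obtain a u' where u: "u = a # u'" and "a \<noteq> z"
    using assms(1,2) by (cases u) (auto simp: itree_lang_def)
  moreover obtain j where "j < length (s 0)" "s 0 ! j = a" "itree_path s j u' = Some m"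
    using assms(3) u by (auto simp: itree_edge_eq_Some_iff split: option.splits)
  ultimately show ?thesis
    using itree_path_ge root_word_nth_0 by (metis gr0I less_one not_less)
qed

lemma itree_path_radix_mono:
  assumes "radix_less u v" "u \<in> itree_lang z s" "v \<in> itree_lang z s"
    and "itree_path s 0 u = Some m" "itree_path s 0 v = Some m'"
  shows "m < m'"
  using assms
proof (induction u arbitrary: v m m' rule: rev_induct)
  case Nil
  then show ?case
    using itree_lang_path_pos by (auto simp: radix_less_def)
next
  case (snoc a u)
  obtain v' b where v: "v = v' @ [b]"
    using snoc.prems(1) by (cases v rule: rev_exhaust) (auto simp: radix_less_def lenlex_conv)
  obtain n j where n: "itree_path s 0 u = Some n" "j < length (s n)" "s n ! j = a"
    and m: "m = first_child s n + j"
    using snoc.prems(4) by (auto simp: itree_path_snoc_eq_Some_iff itree_edge_eq_Some_iff)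
  obtain n' j' where n': "itree_path s 0 v' = Some n'" "j' < length (s n')" "s n' ! j' = b"
    and m': "m' = first_child s n' + j'"
    using snoc.prems(5) v by (auto simp: itree_path_snoc_eq_Some_iff itree_edge_eq_Some_iff)
  have "radix_less (u @ [a]) (v' @ [b])"
    using snoc.prems(1) v by simp
  then consider "radix_less u v'" | "u = v'" "a < b"
    using radix_less_snoc by blast
  then show ?case
  proof cases
    case 1
    have "u \<in> itree_lang z s" "v' \<in> itree_lang z s"
      using snoc.prems(2,3) v itree_lang_snocD by simp_all
    then have "n < n'"
      using snoc.IH[OF 1 _ _ n(1) n'(1)] by simp
    then have "first_child s n + length (s n) \<le> first_child s n'"
      using first_child_Suc_le first_child_Suc by metis
    then show ?thesis
      using m m' n(2) by simp
  next
    case 2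
    then have "n' = n" "s n ! j < s n ! j'"
      using n n' by simp_all
    then have "j < j'"
      using strictly_sorted[of n] n(2) n'(2) sorted_wrt_nth_less
      by (metis linorder_neqE_nat order.asym)
    then show ?thesis
      using m m' \<open>n' = n\<close> by simp
  qed
qed

lemma itree_node_has_parent:
  assumes "0 < m"
  shows "\<exists>n < m. \<exists>j < length (s n). m = first_child s n + j \<and> (n = 0 \<longrightarrow> 0 < j)"
proof -
  have "m < first_child s (Suc m)"
    using first_child_gt[of "Suc m"] by simp
  then obtain n where n: "n < Suc m" "first_child s n \<le> m" "m < first_child s (Suc n)"
    using first_child_interval by blast
  define j where "j = m - first_child s n"
  have "j < length (s n)" "m = first_child s n + j"
    using n by (auto simp: j_def first_child_Suc)
  moreover have "n < m"
    using n(2) first_child_gt[of n] assms by (cases "n = 0") auto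
  moreover have "n = 0 \<longrightarrow> 0 < j"
    using assms by (simp add: j_def)
  ultimately show ?thesis by blast
qed

lemma itree_lang_path_surj: "\<exists>u \<in> itree_lang z s. itree_path s 0 u = Some m"
proof (induction m rule: less_induct)
  case (less m)
  show ?case
  proof (cases "m = 0")
    case True
    then show ?thesis
      by (intro bexI[of _ "[]"]) (auto simp: itree_lang_def)
  next
    case False
    then obtain n j where "n < m" "j < length (s n)" and m: "m = first_child s n + j"
      and root_child: "n = 0 \<longrightarrow> 0 < j"
      using itree_node_has_parent[of m] by auto
    then obtain u where u: "u \<in> itree_lang z s" "itree_path s 0 u = Some n"
      using less.IH by blast
    have "itree_path s 0 (u @ [s n ! j]) = Some m"
      using u(2) itree_edge_nth[OF \<open>j < length (s n)\<close>] m by (simp add: itree_path_append)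
    moreover have "hd (u @ [s n ! j]) \<noteq> z"
    proof (cases "u = []")
      case True
      then have "n = 0" "0 < j"
        using u(2) root_child by auto
      then have "s 0 ! 0 < s 0 ! j"
        using sorted_wrt_nth_less[OF strictly_sorted] \<open>j < length (s n)\<close> by simp
      then show ?thesis
        using True \<open>n = 0\<close> root_word_nth_0 by simp
    next
      case False
      then show ?thesis
        using u(1) by (simp add: itree_lang_def)
    qed
    ultimately show ?thesis
      unfolding itree_lang_def by blast
  qed
qed

lemma itree_path_rep_ans: "itree_path s 0 (rep_ans (itree_lang z s) n) = Some n"
proof -
  define node where "node u = the (itree_path s 0 u)" for u
  have path: "itree_path s 0 u = Some (node u)" if "u \<in> itree_lang z s" for u
    using that by (auto simp: itree_lang_def node_def)
  have mono: "node u < node v"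
    if "u \<in> itree_lang z s" "v \<in> itree_lang z s" "radix_less u v" for u v
    using itree_path_radix_mono[OF that(3,1,2) path[OF that(1)] path[OF that(2)]] .
  have node_eq: "node u = k" if "itree_path s 0 u = Some k" for u k
    using that by (simp add: node_def)
  have "k \<in> node ` itree_lang z s" for k
    using itree_lang_path_surj[of k] node_eq by (metis imageI)
  then have surj: "node ` itree_lang z s = UNIV"
    by blast
  obtain u where u: "u \<in> itree_lang z s" "itree_path s 0 u = Some n"
    using itree_lang_path_surj by blast
  have "rep_ans (itree_lang z s) (node u) = u"
    using mono surj u(1) by (rule rep_ans_eqI)
  then show ?thesis
    using u(2) node_eq[OF u(2)] by simp
qed

lemma itree_path_delta_star:
  assumes "\<And>n j. j < length (s n) \<Longrightarrow> x (first_child s n + j) = \<delta> (x n) (s n ! j)"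
    and "itree_path s 0 u = Some m"
  shows "x m = delta_star \<delta> (x 0) u"
  using assms(2)
proof (induction u arbitrary: m rule: rev_induct)
  case (snoc a u)
  then obtain n j where "itree_path s 0 u = Some n" "j < length (s n)" "s n ! j = a"
    "m = first_child s n + j"
    by (auto simp: itree_path_snoc_eq_Some_iff itree_edge_eq_Some_iff)
  then show ?case
    using snoc.IH assms(1) by (auto simp: delta_star_def)
qed (simp add: delta_star_def)

end

lemma labeled_signature_psig:
  assumes "1 \<le> r" "\<forall>i<r. w i \<noteq> [] \<and> inc_word A (w i)" "\<exists>y. y \<noteq> [] \<and> w 0 = z # y"
  shows "labeled_signature (psig r w) z"
  using assms by unfold_locales (auto simp: psig_def inc_word_def)

lemma alt_fixed_point_first_child:
  assumes "alt_fixed_point r (\<lambda>i q. map (\<delta> q) (w i)) x" "j < length (psig r w n)"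
  shows "x (first_child (psig r w) n + j) = \<delta> (x n) (psig r w n ! j)"
  using assms by (simp add: alt_fixed_point_def first_child_def psig_def)

theorem mainTheorem3:
  fixes r :: nat and A :: "'a::linorder set" and z :: 'a
    and w :: "nat \<Rightarrow> 'a list"
    and Q :: "'q set" and q0 :: 'q and \<delta> :: "'q \<Rightarrow> 'a \<Rightarrow> 'q"
    and x :: "nat \<Rightarrow> 'q"
  assumes "r \<ge> 1"
    and "finite A" and "z \<in> A" and "\<forall>a\<in>A. z \<le> a"
    and "\<forall>i<r. w i \<noteq> [] \<and> inc_word A (w i)"
    and "\<exists>y. y \<noteq> [] \<and> w 0 = z # y"
    and "finite Q" and "q0 \<in> Q" and "\<forall>q\<in>Q. \<forall>a\<in>A. \<delta> q a \<in> Q"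
    and "alt_fixed_point r (\<lambda>i q. map (\<delta> q) (w i)) x"
    and "x 0 = q0"
  shows "\<forall>n. x n = delta_star \<delta> q0 (rep_ans (itree_lang z (psig r w)) n)"
proof
  fix n
  interpret labeled_signature "psig r w" z
    using assms(1,5,6) by (rule labeled_signature_psig)
  have "x n = delta_star \<delta> (x 0) (rep_ans (itree_lang z (psig r w)) n)"
    using alt_fixed_point_first_child[OF assms(10)] itree_path_rep_ans
    by (rule itree_path_delta_star[where x = x and \<delta> = \<delta>])
  then show "x n = delta_star \<delta> q0 (rep_ans (itree_lang z (psig r w)) n)"
    by (simp add: assms(11))
qed

end
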